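(* Let $M$ be a tame paving matroid. Then $M$ is quasi-paving.
   Context: A matroid $M$ of rank $n$ is a paving matroid if every circuit has cardinality $n$ or $n+1$. A dependent hyperplane of $M$ is a maximal subset of the ground set of cardinality at least $n$ in which every $n$-element subset is a circuit. A paving matroid is tame if any three distinct dependent hyperplanes have empty intersection. Quasi-paving construction: given a positive integer $n\le d$ and a collection $\mathcal{H}=\{H_1,\ldots,H_k\}$ of subsets of $[d]$ any three of which have empty intersection, the matroid on $[d]$ whose circuits are: (Type 1) the $(n-1)$-element subsets contained in the intersection of two distinct members of $\mathcal{H}$; (Type 2) the $n$-element subsets of some $H_i$ containing no Type 1 set; (Type 3) the $(n+1)$-element subsets containing no Type 1 or Type 2 set. A matroid is called quasi-paving (more precisely $n$-quasi-paving) if its set of circuits arises from this construction for some such $\mathcal{H}$ and $n$; $\mathcal{H}$ is then called a representation of it. *)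

theory Defs
  imports Main
begin

definition matroid_circuits :: "'a set \<Rightarrow> 'a set set \<Rightarrow> bool" where
  "matroid_circuits E C \<longleftrightarrow>
     finite E \<and> (\<forall>c\<in>C. c \<subseteq> E) \<and> {} \<notin> C \<and>
     (\<forall>c1\<in>C. \<forall>c2\<in>C. c1 \<subseteq> c2 \<longrightarrow> c1 = c2) \<and>
     (\<forall>c1\<in>C. \<forall>c2\<in>C. \<forall>e. c1 \<noteq> c2 \<and> e \<in> c1 \<inter> c2 \<longrightarrow>
        (\<exists>c3\<in>C. c3 \<subseteq> (c1 \<union> c2) - {e}))"

definition indep :: "'a set set \<Rightarrow> 'a set \<Rightarrow> bool" where
  "indep C I \<longleftrightarrow> \<not> (\<exists>c\<in>C. c \<subseteq> I)"

definition matroid_rank :: "'a set \<Rightarrow> 'a set set \<Rightarrow> nat" where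
  "matroid_rank E C = Max {card I | I. I \<subseteq> E \<and> indep C I}"

definition paving :: "'a set \<Rightarrow> 'a set set \<Rightarrow> bool" where
  "paving E C \<longleftrightarrow>
     (\<forall>c\<in>C. card c = matroid_rank E C \<or> card c = matroid_rank E C + 1)"

definition dep_hyp_cand :: "'a set \<Rightarrow> 'a set set \<Rightarrow> 'a set \<Rightarrow> bool" where
  "dep_hyp_cand E C X \<longleftrightarrow>
     X \<subseteq> E \<and> card X \<ge> matroid_rank E C \<and>
     (\<forall>Y\<subseteq>X. card Y = matroid_rank E C \<longrightarrow> Y \<in> C)"

definition dependent_hyperplane :: "'a set \<Rightarrow> 'a set set \<Rightarrow> 'a set \<Rightarrow> bool" where
  "dependent_hyperplane E C X \<longleftrightarrow>
     dep_hyp_cand E C X \<and> (\<forall>Y. dep_hyp_cand E C Y \<and> X \<subseteq> Y \<longrightarrow> Y = X)"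

definition tame_paving :: "'a set \<Rightarrow> 'a set set \<Rightarrow> bool" where
  "tame_paving E C \<longleftrightarrow> paving E C \<and>
     (\<forall>X Y Z. dependent_hyperplane E C X \<and> dependent_hyperplane E C Y \<and>
        dependent_hyperplane E C Z \<and> X \<noteq> Y \<and> X \<noteq> Z \<and> Y \<noteq> Z \<longrightarrow>
        X \<inter> Y \<inter> Z = {})"

definition qp_type1 :: "'a set \<Rightarrow> nat \<Rightarrow> 'a set set \<Rightarrow> 'a set set" where
  "qp_type1 E n H = {X. X \<subseteq> E \<and> card X = n - 1 \<and>
      (\<exists>Hi\<in>H. \<exists>Hj\<in>H. Hi \<noteq> Hj \<and> X \<subseteq> Hi \<inter> Hj)}"

definition qp_type2 :: "'a set \<Rightarrow> nat \<Rightarrow> 'a set set \<Rightarrow> 'a set set" where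
  "qp_type2 E n H = {X. X \<subseteq> E \<and> card X = n \<and> (\<exists>Hi\<in>H. X \<subseteq> Hi) \<and>
      \<not> (\<exists>Y\<in>qp_type1 E n H. Y \<subseteq> X)}"

definition qp_type3 :: "'a set \<Rightarrow> nat \<Rightarrow> 'a set set \<Rightarrow> 'a set set" where
  "qp_type3 E n H = {X. X \<subseteq> E \<and> card X = n + 1 \<and>
      \<not> (\<exists>Y\<in>qp_type1 E n H \<union> qp_type2 E n H. Y \<subseteq> X)}"

definition qp_circuits :: "'a set \<Rightarrow> nat \<Rightarrow> 'a set set \<Rightarrow> 'a set set" where
  "qp_circuits E n H = qp_type1 E n H \<union> qp_type2 E n H \<union> qp_type3 E n H"

definition quasi_paving :: "'a set \<Rightarrow> 'a set set \<Rightarrow> bool" where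
  "quasi_paving E C \<longleftrightarrow>
     (\<exists>n H. 0 < n \<and> n \<le> card E \<and> (\<forall>Hi\<in>H. Hi \<subseteq> E) \<and>
        (\<forall>A\<in>H. \<forall>B\<in>H. \<forall>D\<in>H. A \<noteq> B \<and> A \<noteq> D \<and> B \<noteq> D \<longrightarrow> A \<inter> B \<inter> D = {}) \<and>
        C = qp_circuits E n H)"

end

theory Submission
  imports Defs
begin

text \<open>In a paving matroid of rank \<open>n \<ge> 1\<close> two distinct dependent hyperplanes share no
  \<open>(n-1)\<close>-set \<open>S\<close>: by circuit elimination, every \<open>n\<close>-set made of elements of \<open>S\<close> and of
  elements \<open>a\<close> with \<open>S + a\<close> a circuit is itself a circuit, so the union of the two
  hyperplanes would again be a candidate, contradicting maximality. Taking for \<open>\<H>\<close> all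
  dependent hyperplanes, there are therefore no Type 1 sets, the Type 2 sets are the
  \<open>n\<close>-circuits (each lies in a dependent hyperplane) and the Type 3 sets are the
  \<open>(n+1)\<close>-circuits; tameness is exactly the condition on triple intersections. In rank 0
  every element is a loop, and \<open>\<H> = {E}\<close> with \<open>n = 1\<close> represents the matroid.\<close>

lemma qp_circuits_eqI:
  assumes circuits_subset: "\<And>c. c \<in> C \<Longrightarrow> c \<subseteq> E"
    and antichain: "\<And>c c'. c \<in> C \<Longrightarrow> c' \<in> C \<Longrightarrow> c \<subseteq> c' \<Longrightarrow> c = c'"
    and sizes: "\<And>c. c \<in> C \<Longrightarrow> card c = n \<or> card c = n + 1"
    and no_type1: "qp_type1 E n H = {}"
    and covered: "\<And>c. c \<in> C \<Longrightarrow> card c = n \<Longrightarrow> \<exists>Hi\<in>H. c \<subseteq> Hi"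
    and in_H: "\<And>Hi X. Hi \<in> H \<Longrightarrow> X \<subseteq> Hi \<Longrightarrow> card X = n \<Longrightarrow> X \<in> C"
    and dependent: "\<And>X. X \<subseteq> E \<Longrightarrow> card X = n + 1 \<Longrightarrow> \<exists>c\<in>C. c \<subseteq> X"
  shows "C = qp_circuits E n H"
proof -
  have type2: "qp_type2 E n H = {c \<in> C. card c = n}"
    unfolding qp_type2_def no_type1 using circuits_subset covered in_H by blast
  have type3: "qp_type3 E n H = {c \<in> C. card c = n + 1}"
  proof (intro set_eqI iffI)
    fix X assume "X \<in> qp_type3 E n H"
    then have X: "X \<subseteq> E" "card X = n + 1" "\<And>c. c \<in> C \<Longrightarrow> c \<subseteq> X \<Longrightarrow> card c \<noteq> n"
      unfolding qp_type3_def no_type1 type2 by auto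
    obtain c where c: "c \<in> C" "c \<subseteq> X" using dependent X(1,2) by blast
    with X(2,3) sizes have "card c = card X" by force
    moreover have "finite X"
      using X(2) by (intro card_ge_0_finite) simp
    ultimately have "c = X"
      using c(2) card_subset_eq by blast
    with c X(2) show "X \<in> {c \<in> C. card c = n + 1}" by simp
  next
    fix c assume "c \<in> {c \<in> C. card c = n + 1}"
    with antichain circuits_subset show "c \<in> qp_type3 E n H"
      unfolding qp_type3_def no_type1 type2 by fastforce
  qed
  show ?thesis
    unfolding qp_circuits_def no_type1 type2 type3 using sizes by auto
qed

locale circuit_matroid =
  fixes E :: "'a set" and C :: "'a set set"
  assumes matroid_circuits: "matroid_circuits E C"
begin

abbreviation rk :: nat where "rk \<equiv> matroid_rank E C"

lemma finite_ground: "finite E"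
  using matroid_circuits by (simp add: matroid_circuits_def)

lemma circuit_subset_ground: "c \<in> C \<Longrightarrow> c \<subseteq> E"
  using matroid_circuits by (simp add: matroid_circuits_def)

lemma finite_circuit: "c \<in> C \<Longrightarrow> finite c"
  using circuit_subset_ground finite_ground finite_subset by blast

lemma empty_not_circuit: "{} \<notin> C"
  using matroid_circuits by (simp add: matroid_circuits_def)

lemma card_circuit_pos: "c \<in> C \<Longrightarrow> 0 < card c"
  using empty_not_circuit finite_circuit card_gt_0_iff by blast

lemma circuits_antichain: "c \<in> C \<Longrightarrow> c' \<in> C \<Longrightarrow> c \<subseteq> c' \<Longrightarrow> c = c'"
  using matroid_circuits by (simp add: matroid_circuits_def)

lemma circuit_elimination:
  assumes "c \<in> C" "c' \<in> C" "c \<noteq> c'" "e \<in> c" "e \<in> c'"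
  obtains c'' where "c'' \<in> C" "c'' \<subseteq> c \<union> c' - {e}"
  using matroid_circuits assms unfolding matroid_circuits_def by (meson IntI)

lemma finite_indep_cards: "finite {card I | I. I \<subseteq> E \<and> indep C I}"
  by (rule finite_subset[of _ "{0..card E}"]) (auto intro: card_mono[OF finite_ground])

lemma indep_card_le_rank: "I \<subseteq> E \<Longrightarrow> indep C I \<Longrightarrow> card I \<le> rk"
  unfolding matroid_rank_def by (rule Max_ge[OF finite_indep_cards]) blast

lemma rank_le_card_ground: "rk \<le> card E"
proof -
  have "indep C {}"
    using empty_not_circuit by (simp add: indep_def)
  then have "{card I | I. I \<subseteq> E \<and> indep C I} \<noteq> {}"
    by blast
  then show ?thesis
    unfolding matroid_rank_def
    by (auto simp: Max_le_iff[OF finite_indep_cards] intro: card_mono[OF finite_ground])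
qed

lemma dependent_if_card_gt_rank: "X \<subseteq> E \<Longrightarrow> rk < card X \<Longrightarrow> \<exists>c\<in>C. c \<subseteq> X"
  using indep_card_le_rank[of X] unfolding indep_def by force

lemma circuit_if_extensions_circuits:
  assumes short: "\<And>c. c \<in> C \<Longrightarrow> card S < card c" and "finite S"
    and "card Z = card S + 1" and "\<And>a. a \<in> Z - S \<Longrightarrow> insert a S \<in> C"
  shows "Z \<in> C"
  using assms(3,4)
proof (induction "card (S - Z)" arbitrary: Z)
  case 0
  then have "S \<subseteq> Z"
    using \<open>finite S\<close> by auto
  with "0.prems"(1) \<open>finite S\<close> have "card (Z - S) = 1"
    by (simp add: card_Diff_subset)
  then obtain a where "Z - S = {a}"
    by (rule card_1_singletonE)
  with \<open>S \<subseteq> Z\<close> have "Z = insert a S"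
    by blast
  with "0.prems"(2) \<open>Z - S = {a}\<close> show ?case
    by blast
next
  case (Suc k Z)
  \<comment> \<open>Exchange some \<open>s \<in> S - Z\<close> into \<open>Z\<close> in two ways; eliminating \<open>s\<close> leaves a circuit inside \<open>Z\<close>.\<close>
  have "finite Z"
    using Suc.prems(1) by (intro card_ge_0_finite) simp
  from Suc.hyps(2) have "S - Z \<noteq> {}"
    by (metis card.empty nat.distinct(1))
  then obtain s where s: "s \<in> S" "s \<notin> Z"
    by blast
  have "card (Z - S) = k + 2"
    using Suc.hyps(2) Suc.prems(1) \<open>finite S\<close> \<open>finite Z\<close>
    by (simp add: card_Diff_subset_Int Int_commute card_mono)
  then obtain a b where ab: "a \<in> Z - S" "b \<in> Z - S" "a \<noteq> b"
    using card_le_Suc0_iff_eq[of "Z - S"] \<open>finite Z\<close> by auto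
  define Z1 where "Z1 = insert s (Z - {b})"
  define Z2 where "Z2 = insert s (Z - {a})"
  have exchanged: "insert s (Z - {x}) \<in> C" if "x \<in> Z - S" for x
  proof (rule Suc.hyps(1))
    have "S - insert s (Z - {x}) = S - Z - {s}"
      using that by auto
    then show "k = card (S - insert s (Z - {x}))"
      using Suc.hyps(2) s by simp
    show "card (insert s (Z - {x})) = card S + 1"
      using Suc.prems(1) s that \<open>finite Z\<close> by simp
    show "insert y S \<in> C" if "y \<in> insert s (Z - {x}) - S" for y
      using Suc.prems(2) s that by blast
  qed
  have "Z1 \<in> C" "Z2 \<in> C"
    unfolding Z1_def Z2_def using ab by (blast intro: exchanged)+
  moreover have "Z1 \<noteq> Z2" "s \<in> Z1" "s \<in> Z2"
    using ab s by (auto simp: Z1_def Z2_def)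
  ultimately obtain c where c: "c \<in> C" "c \<subseteq> Z1 \<union> Z2 - {s}"
    by (rule circuit_elimination)
  have "Z1 \<union> Z2 - {s} = Z"
    using ab s by (auto simp: Z1_def Z2_def)
  with c have "c \<subseteq> Z" by simp
  moreover have "card Z \<le> card c"
    using short[OF c(1)] Suc.prems(1) by simp
  ultimately show ?case
    using c(1) \<open>finite Z\<close> card_seteq by blast
qed

lemma rank_pos_if_dep_hyp_cand: "dep_hyp_cand E C X \<Longrightarrow> 0 < rk"
  using empty_not_circuit unfolding dep_hyp_cand_def by (metis card.empty empty_subsetI gr0I)

lemma circuit_in_dependent_hyperplane:
  assumes "c \<in> C" "card c = rk"
  obtains X where "dependent_hyperplane E C X" "c \<subseteq> X"
proof -
  have "dep_hyp_cand E C c"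
    unfolding dep_hyp_cand_def
    using assms circuit_subset_ground finite_circuit card_subset_eq by (metis order_refl)
  moreover have "finite {X. dep_hyp_cand E C X}"
    by (rule finite_subset[of _ "Pow E"]) (auto simp: dep_hyp_cand_def finite_ground)
  ultimately obtain X where "dep_hyp_cand E C X" "c \<subseteq> X"
    and "\<forall>Y\<in>{X. dep_hyp_cand E C X}. X \<subseteq> Y \<longrightarrow> X = Y"
    using finite_has_maximal2 by (metis (no_types, lifting) mem_Collect_eq)
  then have "dependent_hyperplane E C X"
    unfolding dependent_hyperplane_def by auto
  then show thesis
    using \<open>c \<subseteq> X\<close> by (rule that)
qed

end

locale paving_matroid = circuit_matroid +
  assumes paving: "paving E C"
begin

lemma circuit_card: "c \<in> C \<Longrightarrow> card c = rk \<or> card c = rk + 1"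
  using paving by (simp add: paving_def)

lemma dependent_hyperplane_eq_if_common_subset:
  assumes X: "dependent_hyperplane E C X" and Y: "dependent_hyperplane E C Y"
    and S: "S \<subseteq> X \<inter> Y" "card S = rk - 1"
  shows "X = Y"
proof -
  have X_cand: "dep_hyp_cand E C X" and Y_cand: "dep_hyp_cand E C Y"
    using X Y by (simp_all add: dependent_hyperplane_def)
  then have "X \<subseteq> E" "Y \<subseteq> E"
    by (simp_all add: dep_hyp_cand_def)
  then have "finite (X \<union> Y)"
    by (intro finite_subset[OF _ finite_ground]) simp
  then have "finite S"
    by (rule rev_finite_subset) (use S(1) in blast)
  have rk: "rk = card S + 1"
    using rank_pos_if_dep_hyp_cand[OF X_cand] S(2) by simp
  have "Z \<in> C" if "Z \<subseteq> X \<union> Y" "card Z = rk" for Z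
  proof (rule circuit_if_extensions_circuits[OF _ \<open>finite S\<close>])
    show "card S < card c" if "c \<in> C" for c
      using circuit_card[OF that] rk by auto
    show "card Z = card S + 1"
      using \<open>card Z = rk\<close> rk by simp
    show "insert a S \<in> C" if "a \<in> Z - S" for a
    proof -
      have "card (insert a S) = rk"
        using that rk \<open>finite S\<close> by simp
      moreover have "insert a S \<subseteq> X \<or> insert a S \<subseteq> Y"
        using that \<open>Z \<subseteq> X \<union> Y\<close> S(1) by blast
      ultimately show ?thesis
        using X_cand Y_cand unfolding dep_hyp_cand_def by blast
    qed
  qed
  moreover have "rk \<le> card (X \<union> Y)"
    using X_cand card_mono[OF \<open>finite (X \<union> Y)\<close>, of X] by (simp add: dep_hyp_cand_def)
  ultimately have "dep_hyp_cand E C (X \<union> Y)"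
    using \<open>X \<subseteq> E\<close> \<open>Y \<subseteq> E\<close> by (simp add: dep_hyp_cand_def)
  moreover have "\<forall>Z. dep_hyp_cand E C Z \<and> X \<subseteq> Z \<longrightarrow> Z = X"
    "\<forall>Z. dep_hyp_cand E C Z \<and> Y \<subseteq> Z \<longrightarrow> Z = Y"
    using X Y by (simp_all add: dependent_hyperplane_def)
  ultimately show ?thesis
    by blast
qed

lemma circuits_eq_qp_circuits_dependent_hyperplanes:
  "C = qp_circuits E rk {X. dependent_hyperplane E C X}"
proof (rule qp_circuits_eqI)
  show "qp_type1 E rk {X. dependent_hyperplane E C X} = {}"
    unfolding qp_type1_def using dependent_hyperplane_eq_if_common_subset by blast
  show "\<exists>Hi\<in>{X. dependent_hyperplane E C X}. c \<subseteq> Hi" if "c \<in> C" "card c = rk" for c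
    using circuit_in_dependent_hyperplane[OF that] by blast
  show "X \<in> C" if "Hi \<in> {X. dependent_hyperplane E C X}" "X \<subseteq> Hi" "card X = rk" for Hi X
    using that by (simp add: dependent_hyperplane_def dep_hyp_cand_def)
  show "\<exists>c\<in>C. c \<subseteq> X" if "X \<subseteq> E" "card X = rk + 1" for X
    using dependent_if_card_gt_rank[OF that(1)] that(2) by auto
qed (use circuit_subset_ground circuits_antichain circuit_card in auto)

lemma circuits_eq_qp_circuits_rank_zero:
  assumes "rk = 0"
  shows "C = qp_circuits E 1 {E}"
proof (rule qp_circuits_eqI)
  show "card c = 1 \<or> card c = 1 + 1" if "c \<in> C" for c
    using circuit_card[OF that] card_circuit_pos[OF that] assms by auto
  show "qp_type1 E 1 {E} = {}"
    by (auto simp: qp_type1_def)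
  show "X \<in> C" if X: "Hi \<in> {E}" "X \<subseteq> Hi" "card X = 1" for Hi X
  proof -
    obtain c where c: "c \<in> C" "c \<subseteq> X"
      using dependent_if_card_gt_rank[of X] X assms by auto
    have "finite X"
      using \<open>card X = 1\<close> by (intro card_ge_0_finite) simp
    with c have "card c = card X"
      using card_circuit_pos[OF c(1)] card_mono[of X c] \<open>card X = 1\<close> by simp
    with c \<open>finite X\<close> show ?thesis
      using card_subset_eq by blast
  qed
  show "\<exists>c\<in>C. c \<subseteq> X" if "X \<subseteq> E" "card X = 1 + 1" for X
    using dependent_if_card_gt_rank[OF that(1)] that(2) assms by auto
qed (use circuit_subset_ground circuits_antichain in auto)

end

theorem proposition3p4:
  fixes E :: "'a set" and C :: "'a set set"
  assumes "matroid_circuits E C"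
    and "E \<noteq> {}"
    and "tame_paving E C"
  shows "quasi_paving E C"
proof -
  interpret paving_matroid E C
    using assms(1,3) by unfold_locales (simp_all add: tame_paving_def)
  show ?thesis
  proof (cases "rk = 0")
    case True
    have "1 \<le> card E"
      using assms(2) finite_ground by (simp add: Suc_le_eq card_gt_0_iff)
    with True show ?thesis
      unfolding quasi_paving_def using circuits_eq_qp_circuits_rank_zero
      by (intro exI[of _ 1] exI[of _ "{E}"]) auto
  next
    case False
    have "dependent_hyperplane E C X \<Longrightarrow> X \<subseteq> E" for X
      by (simp add: dependent_hyperplane_def dep_hyp_cand_def)
    with False assms(3) show ?thesis
      unfolding quasi_paving_def tame_paving_def
      using circuits_eq_qp_circuits_dependent_hyperplanes rank_le_card_ground
      by (intro exI[of _ rk] exI[of _ "{X. dependent_hyperplane E C X}"]) auto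
  qed
qed

end
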